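(* Let $\delta>0$ be a constant. For scheduling on $m$ identical parallel machines with all jobs available at time $0$, if all predictions are underestimates ($\hat p_j\le p_j$ for every job $j$), then PMLF for parallel machines with parameter $\delta$ is $(2+2\delta)$-competitive for minimizing the total completion time and performs at most $O\big(\frac1\delta\sum_j\log(p_j/\hat p_j)\big)$ preemptions in total.
   Context: There are $n$ jobs, all available at time $0$, and $m$ identical machines, each processing at most one job at a time at unit speed; each job is processed by at most one machine at a time; preemption and migration are allowed. Job $j$ has an unknown processing requirement $p_j\ge1$, learned only at completion, and a known prediction $\hat p_j>0$; it completes at time $C_j$ once it has received $p_j$ units of processing. A preemption is an interruption of a job's processing before completion. An algorithm is $c$-competitive if on every instance $\sum_jC_j$ is at most $c$ times the optimal offline total completion time. PMLF for parallel machines with parameter $\delta>0$: maintain queues $Q_k$ indexed by integers $k$; initially place job $j$ with $(1+\delta)^k\le\hat p_j<(1+\delta)^{k+1}$ into $Q_k$. At any time $t$, associate with each available job the pair $(k,a)$, where $k$ is the index of its current queue and $a$ its position in that queue (the head has position $1$); order the available jobs lexicographically by these pairs and process the first at most $m$ jobs of this order (one per machine). If a job $j\in Q_i$ has received total processing $(1+\delta)^{i+1}$, remove it from $Q_i$ and place it at the end of $Q_{i+1}$.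
   Formalization: The preemption bound $O\big(\frac1\delta\sum_j\log(p_j/\hat p_j)\big)$ is replaced by c times the sum over all jobs of the ceiling of ln(requirement/prediction)/delta, with the constant c depending only on delta. Each condition added here is assumed in the paper as well or is needed for the statement above to hold. *)

theory Defs
  imports "HOL-Analysis.Analysis"
begin

text \<open>Jobs are the natural numbers below n; a schedule S maps each time t to the set of
  jobs processed at time t (each at unit speed on its own machine; migration is free).\<close>

definition indic :: "(real \<Rightarrow> nat set) \<Rightarrow> nat \<Rightarrow> real \<Rightarrow> real" where
  "indic S j s = (if j \<in> S s then 1 else 0)"

definition received :: "(real \<Rightarrow> nat set) \<Rightarrow> nat \<Rightarrow> real \<Rightarrow> real" where
  "received S j t = integral {0..t} (indic S j)"

definition feasible_schedule :: "nat \<Rightarrow> nat \<Rightarrow> (real \<Rightarrow> nat set) \<Rightarrow> bool" where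
  "feasible_schedule n m S \<longleftrightarrow>
     (\<forall>t. S t \<subseteq> {..<n} \<and> card (S t) \<le> m) \<and>
     (\<forall>j t. indic S j integrable_on {0..t})"

definition completes :: "(real \<Rightarrow> nat set) \<Rightarrow> (nat \<Rightarrow> real) \<Rightarrow> nat \<Rightarrow> bool" where
  "completes S p j \<longleftrightarrow> (\<exists>t\<ge>0. p j \<le> received S j t)"

definition compl_time :: "(real \<Rightarrow> nat set) \<Rightarrow> (nat \<Rightarrow> real) \<Rightarrow> nat \<Rightarrow> real" where
  "compl_time S p j = Inf {t. 0 \<le> t \<and> p j \<le> received S j t}"

definition total_cost :: "nat \<Rightarrow> (real \<Rightarrow> nat set) \<Rightarrow> (nat \<Rightarrow> real) \<Rightarrow> real" where
  "total_cost n S p = (\<Sum>j<n. compl_time S p j)"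

text \<open>Preemption of job j at time t: a processing stretch of j ends at t, before j completes.\<close>
definition preempt_at :: "(real \<Rightarrow> nat set) \<Rightarrow> (nat \<Rightarrow> real) \<Rightarrow> nat \<Rightarrow> real \<Rightarrow> bool" where
  "preempt_at S p j t \<longleftrightarrow> 0 < t \<and> t < compl_time S p j \<and>
     (\<exists>\<epsilon>>0. \<forall>s. t - \<epsilon> < s \<and> s < t \<longrightarrow> j \<in> S s) \<and>
     (\<forall>\<epsilon>>0. \<exists>s. t \<le> s \<and> s < t + \<epsilon> \<and> j \<notin> S s)"

definition num_preemptions :: "(real \<Rightarrow> nat set) \<Rightarrow> (nat \<Rightarrow> real) \<Rightarrow> nat \<Rightarrow> nat" where
  "num_preemptions S p j = card {t. preempt_at S p j t}"

definition thr :: "real \<Rightarrow> int \<Rightarrow> real" where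
  "thr \<delta> i = (1 + \<delta>) powr (real_of_int i)"

definition kinit :: "real \<Rightarrow> (nat \<Rightarrow> real) \<Rightarrow> nat \<Rightarrow> int" where
  "kinit \<delta> ph j = \<lfloor>log (1 + \<delta>) (ph j)\<rfloor>"

text \<open>Current queue index of job j at time t: it leaves Q_i as soon as it has received (1+delta)^(i+1).\<close>
definition qidx :: "real \<Rightarrow> (nat \<Rightarrow> real) \<Rightarrow> (real \<Rightarrow> nat set) \<Rightarrow> nat \<Rightarrow> real \<Rightarrow> int" where
  "qidx \<delta> ph S j t =
     (if received S j t < thr \<delta> (kinit \<delta> ph j + 1) then kinit \<delta> ph j
      else \<lfloor>log (1 + \<delta>) (received S j t)\<rfloor>)"

definition reached :: "real \<Rightarrow> (nat \<Rightarrow> real) \<Rightarrow> (real \<Rightarrow> nat set) \<Rightarrow> nat \<Rightarrow> int \<Rightarrow> real \<Rightarrow> bool" where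
  "reached \<delta> ph S j i t \<longleftrightarrow>
     kinit \<delta> ph j = i \<or> (kinit \<delta> ph j < i \<and> thr \<delta> i \<le> received S j t)"

definition enters_before :: "real \<Rightarrow> (nat \<Rightarrow> real) \<Rightarrow> (real \<Rightarrow> nat set) \<Rightarrow> nat \<Rightarrow> nat \<Rightarrow> int \<Rightarrow> bool" where
  "enters_before \<delta> ph S j j' i \<longleftrightarrow>
     (\<exists>s\<ge>0. reached \<delta> ph S j i s \<and> \<not> reached \<delta> ph S j' i s)"

text \<open>pos j i is the (tie-broken) position of job j in queue Q_i: positions are distinct, and
  a job placed into Q_i earlier is ahead of one placed later (appending at the end); ties among
  simultaneous placements (including the initial placement) are broken arbitrarily but fixed.\<close>
definition valid_positions :: "nat \<Rightarrow> real \<Rightarrow> (nat \<Rightarrow> real) \<Rightarrow> (real \<Rightarrow> nat set) \<Rightarrow> (nat \<Rightarrow> int \<Rightarrow> nat) \<Rightarrow> bool" where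
  "valid_positions n \<delta> ph S pos \<longleftrightarrow>
     (\<forall>i. inj_on (\<lambda>j. pos j i) {..<n}) \<and>
     (\<forall>j<n. \<forall>j'<n. \<forall>i. enters_before \<delta> ph S j j' i \<longrightarrow> pos j i < pos j' i)"

definition available :: "nat \<Rightarrow> (nat \<Rightarrow> real) \<Rightarrow> (real \<Rightarrow> nat set) \<Rightarrow> nat \<Rightarrow> real \<Rightarrow> bool" where
  "available n p S j t \<longleftrightarrow> j < n \<and> received S j t < p j"

definition prio_less :: "real \<Rightarrow> (nat \<Rightarrow> real) \<Rightarrow> (real \<Rightarrow> nat set) \<Rightarrow> (nat \<Rightarrow> int \<Rightarrow> nat) \<Rightarrow> nat \<Rightarrow> nat \<Rightarrow> real \<Rightarrow> bool" where
  "prio_less \<delta> ph S pos j j' t \<longleftrightarrow>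
     qidx \<delta> ph S j t < qidx \<delta> ph S j' t \<or>
     (qidx \<delta> ph S j t = qidx \<delta> ph S j' t \<and> pos j (qidx \<delta> ph S j t) < pos j' (qidx \<delta> ph S j t))"

text \<open>S is a run of PMLF (parameter delta) on m machines with tie-breaking positions pos:
  at every time t >= 0 exactly the first (at most) m available jobs in the order are processed.\<close>
definition is_PMLF :: "nat \<Rightarrow> nat \<Rightarrow> real \<Rightarrow> (nat \<Rightarrow> real) \<Rightarrow> (nat \<Rightarrow> real)
     \<Rightarrow> (real \<Rightarrow> nat set) \<Rightarrow> (nat \<Rightarrow> int \<Rightarrow> nat) \<Rightarrow> bool" where
  "is_PMLF n m \<delta> p ph S pos \<longleftrightarrow>
     feasible_schedule n m S \<and> valid_positions n \<delta> ph S pos \<and>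
     (\<forall>t\<ge>0. S t = {j. available n p S j t \<and>
                      card {j'. available n p S j' t \<and> prio_less \<delta> ph S pos j' j t} < m})"

end

theory Submission
  imports Defs
begin

text \<open>While job \<open>j\<close> is unfinished, at every instant it either runs or all
  \<open>m\<close> machines run jobs ahead of it. A job ahead of \<open>j\<close> sits in a queue of index at most that
  of \<open>j\<close>, so, the prediction of \<open>j\<close> being an underestimate, it has received less than
  \<open>(1 + \<delta>) p j\<close>. Hence \<open>C j \<le> p j + (\<Sum>k\<noteq>j. min (p k) ((1 + \<delta>) p j)) / m\<close>, and summing,
  \<open>ALG \<le> (1 + \<delta>) (\<Sum>j. p j + (2 / m) \<Sum>{j, k}. min (p j) (p k))\<close>. Conversely, order the
  jobs by completion time in any feasible schedule and let \<open>c j\<close> be the number of jobs completing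
  after \<open>j\<close>. At every time the jobs being processed satisfy
  \<open>\<Sum> (2 c j + m) \<le> 2 m \<cdot> #(unfinished jobs)\<close>; integrating over time gives
  \<open>\<Sum>j. p j (m + 2 c j) \<le> 2 m OPT\<close>. Since \<open>\<Sum>{j, k}. min (p j) (p k) \<le> \<Sum>j. p j c j\<close>, the
  two bounds combine to \<open>ALG \<le> (1 + \<delta>) / m \<cdot> \<Sum>j. p j (m + 2 c j) \<le> (2 + 2 \<delta>) OPT\<close>.

  A job is preempted only at the instant it is promoted to a new queue, because while
  it stays in its queue no job overtakes it. So the preemptions of \<open>j\<close> occur at distinct queue
  indices \<open>i\<close> with \<open>log\<^bsub>1+\<delta>\<^esub> (ph j) < i < log\<^bsub>1+\<delta>\<^esub> (p j)\<close>.

  PMLF is simulated event by event: between consecutive completions and promotions the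
  set of processed jobs is constant, and a potential counting the pending completions and
  promotions shows that the event times are unbounded.\<close>

lemma indic_bounds [simp]: "0 \<le> indic S j s" "indic S j s \<le> 1"
  by (auto simp: indic_def)

lemma received_neg: "t < 0 \<Longrightarrow> received S j t = 0"
  by (simp add: received_def)

lemma received_0 [simp]: "received S j 0 = 0"
  by (simp add: received_def)

lemma received_increment_bounds:
  assumes int: "\<forall>t. indic S j integrable_on {0..t}" and "a \<le> b"
  shows "0 \<le> received S j b - received S j a" "received S j b - received S j a \<le> b - a"
proof -
  have "0 \<le> received S j b - received S j a \<and> received S j b - received S j a \<le> b - a"
  proof (cases "b < 0")
    case True
    thus ?thesis using assms(2) by (simp add: received_neg)
  next
    case False
    define a' where "a' = max a 0"
    have a': "0 \<le> a'" "a \<le> a'" "a' \<le> b" using False assms(2) by (auto simp: a'_def)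
    have "received S j a = received S j a'"
      using received_neg[of a S j] by (cases "a < 0") (simp_all add: a'_def)
    moreover have "received S j a' + integral {a'..b} (indic S j) = received S j b"
      using a' int[rule_format, of b] unfolding received_def
      by (intro Henstock_Kurzweil_Integration.integral_combine) auto
    moreover have ab: "indic S j integrable_on {a'..b}"
      by (rule integrable_subinterval_real[OF int[rule_format, of b]]) (use a' in auto)
    moreover have "0 \<le> integral {a'..b} (indic S j)" using ab by (intro integral_nonneg) auto
    moreover have "integral {a'..b} (indic S j) \<le> integral {a'..b} (\<lambda>_. 1::real)"
      using ab by (intro integral_le) auto
    ultimately show ?thesis using a' by simp
  qed
  thus "0 \<le> received S j b - received S j a" "received S j b - received S j a \<le> b - a"
    by auto
qed

lemma received_mono:
  assumes "\<forall>t. indic S j integrable_on {0..t}" "a \<le> b"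
  shows "received S j a \<le> received S j b"
  using received_increment_bounds[OF assms] by simp

lemma received_continuous_on:
  assumes "\<forall>t. indic S j integrable_on {0..t}"
  shows "continuous_on A (received S j)"
proof -
  have "1-lipschitz_on A (received S j)"
  proof (rule lipschitz_onI)
    fix x y
    show "dist (received S j x) (received S j y) \<le> 1 * dist x y"
      using received_increment_bounds[OF assms, of x y] received_increment_bounds[OF assms, of y x]
      by (cases "x \<le> y") (auto simp: dist_real_def abs_if)
  qed simp
  thus ?thesis by (rule lipschitz_on_continuous_on)
qed

lemma Inf_reaching_time_mem:
  assumes int: "\<forall>t. indic S j integrable_on {0..t}" and "0 \<le> T" "B \<le> received S j T"
  shows "Inf {t. 0 \<le> t \<and> B \<le> received S j t} \<in> {t. 0 \<le> t \<and> B \<le> received S j t}"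
proof (rule closed_contains_Inf)
  have "{t. 0 \<le> t \<and> B \<le> received S j t} = {0..} \<inter> received S j -` {B..}" by auto
  thus "closed {t. 0 \<le> t \<and> B \<le> received S j t}"
    using received_continuous_on[OF int, of UNIV] by (auto intro: closed_Int closed_vimage)
qed (use assms in \<open>auto intro: bdd_belowI[of _ 0]\<close>)

lemma last_time_below:
  assumes int: "\<forall>t. indic S j integrable_on {0..t}" and "0 \<le> T" "0 \<le> B"
  obtains \<tau> where "0 \<le> \<tau>" "\<tau> \<le> T" "received S j \<tau> \<le> B"
    "\<And>t. 0 \<le> t \<Longrightarrow> t \<le> T \<Longrightarrow> received S j t < B \<Longrightarrow> t \<le> \<tau>"
proof (cases "B \<le> received S j T")
  case True
  define X where "X = {t. 0 \<le> t \<and> B \<le> received S j t}"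
  have mem: "Inf X \<in> X" unfolding X_def by (rule Inf_reaching_time_mem[OF int assms(2) True])
  have low: "Inf X \<le> t" if "t \<in> X" for t
    using that by (intro cInf_lower) (auto simp: X_def intro: bdd_belowI[of _ 0])
  obtain s where s: "0 \<le> s" "s \<le> T" "received S j s = B"
    using IVT'[of "received S j" 0 B T] received_continuous_on[OF int] True assms
    by (auto simp: received_def)
  show ?thesis
  proof
    show "0 \<le> Inf X" using mem by (simp add: X_def)
    show "Inf X \<le> T" using low[of T] True assms(2) by (simp add: X_def)
    show "received S j (Inf X) \<le> B"
      using low[of s] s received_mono[OF int, of "Inf X" s] by (simp add: X_def)
    show "t \<le> Inf X" if "0 \<le> t" "t \<le> T" "received S j t < B" for t
      using that mem received_mono[OF int, of "Inf X" t] by (force simp: X_def)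
  qed
qed (use assms in auto)

lemma compl_time_reached:
  assumes "\<forall>t. indic S j integrable_on {0..t}" and "completes S p j"
  shows "0 \<le> compl_time S p j" "p j \<le> received S j (compl_time S p j)"
  using Inf_reaching_time_mem[OF assms(1)] assms(2)
  by (auto simp: completes_def compl_time_def)

lemma compl_time_le:
  assumes "0 \<le> t" "p j \<le> received S j t"
  shows "compl_time S p j \<le> t"
  unfolding compl_time_def using assms by (intro cInf_lower) (auto intro: bdd_belowI[of _ 0])

lemma has_integral_received_upto:
  assumes "\<forall>t. indic S j integrable_on {0..t}" "0 \<le> \<tau>" "\<tau> \<le> T"
  shows "((\<lambda>t. if t \<le> \<tau> \<and> j \<in> S t then 1 else 0) has_integral received S j \<tau>) {0..T}"
proof -
  have "{0..\<tau>} \<inter> {0..T} = {0..\<tau>}" using assms(3) by auto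
  moreover have "(indic S j has_integral received S j \<tau>) {0..\<tau>}"
    using assms(1) by (simp add: received_def integrable_integral)
  ultimately have "((\<lambda>t. if t \<in> {0..\<tau>} then indic S j t else 0) has_integral received S j \<tau>) {0..T}"
    by (simp only: has_integral_restrict_Int)
  thus ?thesis by (rule has_integral_cong[THEN iffD1, rotated]) (auto simp: indic_def)
qed

lemma has_integral_upto:
  fixes C T :: real
  assumes "0 \<le> C" "C \<le> T"
  shows "((\<lambda>t. if t \<le> C then 1 else 0) has_integral C) {0..T}"
proof -
  have "{0..C} \<inter> {0..T} = {0..C}" using assms(2) by auto
  moreover have "((\<lambda>_. 1::real) has_integral C) {0..C}"
    using has_integral_const_real[of "1::real" 0 C] assms(1) by simp
  ultimately have "((\<lambda>t. if t \<in> {0..C} then 1::real else 0) has_integral C) {0..T}"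
    by (simp only: has_integral_restrict_Int)
  thus ?thesis by (rule has_integral_cong[THEN iffD1, rotated]) auto
qed

definition order_rank :: "('a \<Rightarrow> 'a \<Rightarrow> bool) \<Rightarrow> 'a set \<Rightarrow> 'a \<Rightarrow> nat" where
  "order_rank R A a = card {b \<in> A. R b a}"

lemma order_rank_less:
  assumes "finite A" "irreflp_on A R" "transp_on A R" "a \<in> A" "b \<in> A" "R a b"
  shows "order_rank R A a < order_rank R A b"
proof -
  have "{c \<in> A. R c a} \<subset> {c \<in> A. R c b}"
    using assms unfolding irreflp_on_def transp_on_def by blast
  thus ?thesis unfolding order_rank_def using assms(1) by (intro psubset_card_mono) auto
qed

lemma order_rank_less_card:
  assumes "finite A" "irreflp_on A R" "a \<in> A"
  shows "order_rank R A a < card A"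
proof -
  have "{c \<in> A. R c a} \<subset> A" using assms unfolding irreflp_on_def by blast
  thus ?thesis unfolding order_rank_def using assms(1) by (intro psubset_card_mono)
qed

lemma inj_on_order_rank:
  assumes "finite A" "irreflp_on A R" "transp_on A R" "totalp_on A R"
  shows "inj_on (order_rank R A) A"
proof (rule inj_onI)
  fix a b assume "a \<in> A" "b \<in> A" "order_rank R A a = order_rank R A b"
  thus "a = b" using order_rank_less[OF assms(1-3)] assms(4)
    by (metis less_irrefl totalp_onD)
qed

lemma card_order_rank_less:
  assumes "finite A" "irreflp_on A R" "transp_on A R" "totalp_on A R"
  shows "card {a \<in> A. order_rank R A a < k} = min k (card A)"
proof -
  let ?rk = "order_rank R A"
  have inj: "inj_on ?rk A" by (rule inj_on_order_rank[OF assms])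
  have "?rk ` A = {..<card A}"
  proof (rule card_subset_eq)
    show "?rk ` A \<subseteq> {..<card A}" using order_rank_less_card[OF assms(1,2)] by auto
  qed (use card_image[OF inj] in simp_all)
  moreover have "?rk ` {a \<in> A. ?rk a < k} = {x \<in> ?rk ` A. x < k}" by auto
  ultimately have "?rk ` {a \<in> A. ?rk a < k} = {..<min k (card A)}" by auto
  moreover have "inj_on ?rk {a \<in> A. ?rk a < k}" using inj by (rule inj_on_subset) auto
  ultimately show ?thesis by (metis card_image card_lessThan)
qed

lemma transp_tiebreak:
  fixes R :: "'a::linorder \<Rightarrow> 'a \<Rightarrow> bool"
  assumes "asymp R" "\<And>a b c. R a c \<Longrightarrow> R a b \<or> R b c"
  shows "transp (\<lambda>a b. R a b \<or> (\<not> R b a \<and> a < b))"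
proof (rule transpI)
  fix a b c
  assume "R a b \<or> \<not> R b a \<and> a < b" "R b c \<or> \<not> R c b \<and> b < c"
  thus "R a c \<or> \<not> R c a \<and> a < c"
    using assms(2)[of a b c] assms(2)[of b c a] assms(2)[of c a b] asympD[OF assms(1), of b c]
      less_trans[of a b c] by blast
qed

lemma card_times_pred_le_twice_sum:
  fixes X :: "nat set"
  assumes "finite X"
  shows "card X * (card X - 1) \<le> 2 * \<Sum>X"
  using assms
proof (induction "card X" arbitrary: X)
  case (Suc k)
  define M where "M = Max X"
  have MX: "M \<in> X" unfolding M_def using Suc by (metis Max_in card.empty nat.distinct(1))
  have "k * (k - 1) \<le> 2 * \<Sum>(X - {M})" using Suc MX by (metis card_Diff_singleton diff_Suc_1 finite_Diff)
  moreover have "X \<subseteq> {..M}" unfolding M_def using Suc by auto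
  hence "card X \<le> Suc M" by (metis card_atMost card_mono finite_atMost)
  moreover have "\<Sum>X = M + \<Sum>(X - {M})" using Suc MX by (simp add: sum.remove)
  moreover have "2 * k + k * (k - 1) = Suc k * k" by (cases k) auto
  ultimately show ?case using Suc.hyps(2)[symmetric] by simp
qed simp

lemma sum_distinct_below_le:
  fixes c :: "'a \<Rightarrow> nat"
  assumes "finite W" "inj_on c W" "\<forall>j\<in>W. c j < N"
  shows "2 * (\<Sum>j\<in>W. real (c j)) \<le> real (card W) * (2 * real N - 1 - real (card W))"
proof -
  define d where "d j = N - 1 - c j" for j
  have d: "real (d j) = real N - 1 - real (c j)" if "j \<in> W" for j
  proof -
    have "Suc (c j) \<le> N" using assms(3) that by (simp add: Suc_le_eq)
    thus ?thesis by (simp add: d_def of_nat_diff)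
  qed
  have injd: "inj_on d W"
  proof (rule inj_onI)
    fix a b assume ab: "a \<in> W" "b \<in> W" "d a = d b"
    hence "c a = c b" using d[of a] d[of b] by simp
    thus "a = b" using assms(2) ab by (meson inj_onD)
  qed
  have "card W * (card W - 1) \<le> 2 * (\<Sum>j\<in>W. d j)"
    using card_times_pred_le_twice_sum[of "d ` W"] assms(1) card_image[OF injd] sum.reindex[OF injd, of id]
    by simp
  hence "real (card W * (card W - 1)) \<le> real (2 * (\<Sum>j\<in>W. d j))" by (simp only: of_nat_le_iff)
  moreover have "real (card W * (card W - 1)) = real (card W) * (real (card W) - 1)"
    by (cases "card W") (auto simp: algebra_simps)
  moreover have "real (2 * (\<Sum>j\<in>W. d j)) = 2 * (\<Sum>j\<in>W. real (d j))" by simp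
  moreover have "(\<Sum>j\<in>W. real (d j)) = real (card W) * (real N - 1) - (\<Sum>j\<in>W. real (c j))"
    using d by (simp add: sum_subtractf)
  moreover have "real (card W) * (2 * real N - 1 - real (card W))
      = 2 * (real (card W) * (real N - 1)) - real (card W) * (real (card W) - 1)"
    by (simp add: algebra_simps)
  ultimately show ?thesis by linarith
qed

text \<open>In the application \<open>U\<close> is the set of jobs unfinished at some time, \<open>W\<close> the set of jobs
  processed then, and \<open>c j\<close> the number of jobs of \<open>U\<close> completing after \<open>j\<close>.\<close>
lemma sum_weighted_processed_le:
  fixes U W :: "'a set" and c :: "'a \<Rightarrow> nat"
  assumes "finite U" "W \<subseteq> U" "card W \<le> m" "inj_on c U" "\<forall>j\<in>U. c j < card U"
  shows "(\<Sum>j\<in>W. real (2 * c j + m)) \<le> 2 * real m * real (card U)"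
proof -
  let ?w = "real (card W)" and ?N = "real (card U)"
  have "2 * (\<Sum>j\<in>W. real (c j)) \<le> ?w * (2 * ?N - 1 - ?w)"
    using assms by (intro sum_distinct_below_le) (auto intro: finite_subset inj_on_subset)
  moreover have "card W \<le> card U" using assms(1,2) by (rule card_mono)
  hence "0 \<le> (real m - ?w) * (2 * ?N - 1 - ?w) + real m"
    using assms(3) by (cases "card U = 0") (auto intro!: add_nonneg_nonneg mult_nonneg_nonneg)
  moreover have "(\<Sum>j\<in>W. real (2 * c j + m)) = 2 * (\<Sum>j\<in>W. real (c j)) + ?w * real m"
    by (simp add: sum.distrib sum_distrib_left)
  moreover have "?w * (2 * ?N - 1 - ?w) + ?w * real m
      = 2 * real m * ?N - ((real m - ?w) * (2 * ?N - 1 - ?w) + real m)"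
    by (simp add: algebra_simps)
  ultimately show ?thesis by linarith
qed

lemma sum_min_pairs_le:
  fixes x :: "'a \<Rightarrow> real"
  assumes "finite A" "asymp R" "totalp_on A R"
  shows "(\<Sum>j\<in>A. \<Sum>k\<in>A - {j}. min (x j) (x k)) \<le> 2 * (\<Sum>j\<in>A. x j * card {k \<in> A. R j k})"
proof -
  have split: "A - {j} = {k \<in> A. R j k} \<union> {k \<in> A. R k j}" if "j \<in> A" for j
    using that assms(2,3) by (auto simp: totalp_on_def dest: asympD)
  have disj: "{k \<in> A. R j k} \<inter> {k \<in> A. R k j} = {}" for j
    using assms(2) by (auto dest: asympD)
  have "(\<Sum>j\<in>A. \<Sum>k\<in>A - {j}. min (x j) (x k))
          = (\<Sum>j\<in>A. \<Sum>k | k \<in> A \<and> R j k. min (x j) (x k))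
            + (\<Sum>j\<in>A. \<Sum>k | k \<in> A \<and> R k j. min (x j) (x k))"
    using assms(1) by (simp add: split disj sum.union_disjoint sum.distrib)
  also have "(\<Sum>j\<in>A. \<Sum>k | k \<in> A \<and> R k j. min (x j) (x k))
               = (\<Sum>j\<in>A. \<Sum>k | k \<in> A \<and> R j k. min (x j) (x k))"
    using sum.swap_restrict[OF assms(1) assms(1), of "\<lambda>j k. min (x j) (x k)" "\<lambda>j k. R k j"]
    by (simp add: min.commute)
  also have "(\<Sum>j\<in>A. \<Sum>k | k \<in> A \<and> R j k. min (x j) (x k)) \<le> (\<Sum>j\<in>A. x j * card {k \<in> A. R j k})"
  proof (intro sum_mono)
    fix j
    have "(\<Sum>k | k \<in> A \<and> R j k. min (x j) (x k)) \<le> (\<Sum>k | k \<in> A \<and> R j k. x j)"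
      by (intro sum_mono) simp
    thus "(\<Sum>k | k \<in> A \<and> R j k. min (x j) (x k)) \<le> x j * card {k \<in> A. R j k}"
      by (simp add: mult.commute)
  qed
  finally show ?thesis by simp
qed

definition queue_of :: "real \<Rightarrow> (nat \<Rightarrow> real) \<Rightarrow> nat \<Rightarrow> real \<Rightarrow> int" where
  "queue_of \<delta> ph j x =
     (if x < thr \<delta> (kinit \<delta> ph j + 1) then kinit \<delta> ph j else \<lfloor>log (1 + \<delta>) x\<rfloor>)"

lemma qidx_eq_queue_of: "qidx \<delta> ph S j t = queue_of \<delta> ph j (received S j t)"
  by (simp add: qidx_def queue_of_def)

definition promotion_levels :: "real \<Rightarrow> (nat \<Rightarrow> real) \<Rightarrow> (nat \<Rightarrow> real) \<Rightarrow> nat \<Rightarrow> int set" where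
  "promotion_levels \<delta> ph p j = {i. kinit \<delta> ph j < i \<and> thr \<delta> i < p j}"

context
  fixes \<delta> :: real
  assumes \<delta>_pos: "\<delta> > 0"
begin

lemma thr_pos: "0 < thr \<delta> i"
  using \<delta>_pos by (simp add: thr_def)

lemma thr_le_iff: "thr \<delta> i \<le> thr \<delta> i' \<longleftrightarrow> i \<le> i'"
  using \<delta>_pos by (simp add: thr_def)

lemma thr_less_iff: "thr \<delta> i < thr \<delta> i' \<longleftrightarrow> i < i'"
  using thr_le_iff[of i' i] by linarith

lemma thr_add_one: "thr \<delta> (i + 1) = (1 + \<delta>) * thr \<delta> i"
  using \<delta>_pos by (simp add: thr_def powr_add)

lemma thr_le_iff_le_log: "0 < x \<Longrightarrow> thr \<delta> i \<le> x \<longleftrightarrow> i \<le> log (1 + \<delta>) x"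
  using \<delta>_pos by (simp add: thr_def le_log_iff)

lemma thr_less_iff_less_log: "0 < x \<Longrightarrow> thr \<delta> i < x \<longleftrightarrow> i < log (1 + \<delta>) x"
  using \<delta>_pos by (simp add: thr_def less_log_iff)

lemma thr_kinit_le: "0 < ph j \<Longrightarrow> thr \<delta> (kinit \<delta> ph j) \<le> ph j"
  by (simp add: thr_le_iff_le_log kinit_def)

lemma kinit_le_queue_of: "kinit \<delta> ph j \<le> queue_of \<delta> ph j x"
proof (cases "x < thr \<delta> (kinit \<delta> ph j + 1)")
  case False
  hence "0 < x" using thr_pos[of "kinit \<delta> ph j + 1"] by linarith
  hence "kinit \<delta> ph j + 1 \<le> log (1 + \<delta>) x"
    using False thr_le_iff_le_log[of x "kinit \<delta> ph j + 1"] by simp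
  thus ?thesis using False by (simp add: queue_of_def le_floor_iff)
qed (simp add: queue_of_def)

lemma queue_of_le_iff:
  assumes "kinit \<delta> ph j \<le> i"
  shows "queue_of \<delta> ph j x \<le> i \<longleftrightarrow> x < thr \<delta> (i + 1)"
proof (cases "x < thr \<delta> (kinit \<delta> ph j + 1)")
  case True
  moreover have "thr \<delta> (kinit \<delta> ph j + 1) \<le> thr \<delta> (i + 1)" using assms by (simp add: thr_le_iff)
  ultimately show ?thesis using assms by (simp add: queue_of_def)
next
  case False
  hence "0 < x" using thr_pos[of "kinit \<delta> ph j + 1"] by linarith
  thus ?thesis using False thr_le_iff_le_log[of x "i + 1"]
    by (auto simp: queue_of_def floor_le_iff)
qed

lemma less_thr_queue_of: "x < thr \<delta> (queue_of \<delta> ph j x + 1)"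
  using queue_of_le_iff[OF kinit_le_queue_of[of ph j x], of x] by simp

lemma queue_of_mono: "x \<le> y \<Longrightarrow> queue_of \<delta> ph j x \<le> queue_of \<delta> ph j y"
  using queue_of_le_iff[OF kinit_le_queue_of[of ph j y], of x] less_thr_queue_of[of y ph j] by simp

lemma le_queue_of_iff:
  assumes "kinit \<delta> ph j < i"
  shows "i \<le> queue_of \<delta> ph j x \<longleftrightarrow> thr \<delta> i \<le> x"
  using queue_of_le_iff[of ph j "i - 1" x] assms by force

lemma thr_queue_of_le: "0 < ph j \<Longrightarrow> thr \<delta> (queue_of \<delta> ph j x) \<le> max (ph j) x"
  using thr_kinit_le[of ph j] le_queue_of_iff[of ph j "queue_of \<delta> ph j x" x] kinit_le_queue_of[of ph j x]
  by (cases "queue_of \<delta> ph j x = kinit \<delta> ph j") auto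

lemma queue_of_eq:
  assumes "x \<le> y" "y < thr \<delta> (queue_of \<delta> ph j x + 1)"
  shows "queue_of \<delta> ph j y = queue_of \<delta> ph j x"
  using queue_of_le_iff[OF kinit_le_queue_of[of ph j x], of y] queue_of_mono[OF assms(1), of ph j] assms(2)
  by simp

lemma queue_of_thr: "kinit \<delta> ph j < i \<Longrightarrow> queue_of \<delta> ph j (thr \<delta> i) = i"
  using le_queue_of_iff[of ph j i "thr \<delta> i"] queue_of_le_iff[of ph j i "thr \<delta> i"] thr_less_iff[of i "i + 1"]
  by auto

lemma queue_of_zero: "queue_of \<delta> ph j 0 = kinit \<delta> ph j"
  using thr_pos[of "kinit \<delta> ph j + 1"] by (simp add: queue_of_def)

lemma promotion_levels_subset:
  "0 < p j \<Longrightarrow> promotion_levels \<delta> ph p j \<subseteq> {kinit \<delta> ph j + 1 .. \<lceil>log (1 + \<delta>) (p j)\<rceil> - 1}"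
  by (auto simp: promotion_levels_def thr_less_iff_less_log ceiling_less_iff less_ceiling_iff)

lemma finite_promotion_levels: "finite (promotion_levels \<delta> ph p j)"
proof (cases "0 < p j")
  case False
  hence "promotion_levels \<delta> ph p j = {}"
    using thr_pos less_trans unfolding promotion_levels_def by fastforce
  thus ?thesis by simp
qed (simp add: finite_subset[OF promotion_levels_subset])

lemma card_promotion_levels_less:
  assumes "0 < ph j" "ph j \<le> p j"
  shows "real (card (promotion_levels \<delta> ph p j)) < ln (p j / ph j) / ln (1 + \<delta>) + 1"
proof -
  have "card (promotion_levels \<delta> ph p j)
          \<le> card {kinit \<delta> ph j + 1 .. \<lceil>log (1 + \<delta>) (p j)\<rceil> - 1}"
    using assms by (intro card_mono promotion_levels_subset) auto
  hence "real (card (promotion_levels \<delta> ph p j))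
          \<le> real (card {kinit \<delta> ph j + 1 .. \<lceil>log (1 + \<delta>) (p j)\<rceil> - 1})" by simp
  also have "\<dots> < ln (p j / ph j) / ln (1 + \<delta>) + 1"
  proof -
    have "log (1 + \<delta>) (p j) - log (1 + \<delta>) (ph j) = ln (p j / ph j) / ln (1 + \<delta>)"
      using assms unfolding log_def by (simp add: ln_div diff_divide_distrib)
    moreover have "0 \<le> ln (p j / ph j) / ln (1 + \<delta>)" using assms \<delta>_pos by simp
    ultimately show ?thesis using ceiling_correct[of "log (1 + \<delta>) (p j)"]
        real_of_int_floor_gt_diff_one[of "log (1 + \<delta>) (ph j)"]
      by (simp add: kinit_def) linarith
  qed
  finally show ?thesis .
qed

lemma card_promotion_levels_le:
  assumes "0 < ph j" "ph j \<le> p j"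
  shows "real (card (promotion_levels \<delta> ph p j))
           \<le> (\<delta> / ln (1 + \<delta>) + 1) * \<lceil>ln (p j / ph j) / \<delta>\<rceil>"
proof -
  define C where "C = real_of_int \<lceil>ln (p j / ph j) / \<delta>\<rceil>"
  have ln: "0 < ln (1 + \<delta>)" "0 \<le> ln (p j / ph j)" using \<delta>_pos assms by simp_all
  show ?thesis
  proof (cases "ln (p j / ph j) = 0")
    case True
    thus ?thesis using card_promotion_levels_less[of ph j p, OF assms] by simp
  next
    case False
    hence C: "1 \<le> C" "ln (p j / ph j) / \<delta> \<le> C" unfolding C_def using ln \<delta>_pos by simp_all
    have "ln (p j / ph j) / ln (1 + \<delta>) = \<delta> / ln (1 + \<delta>) * (ln (p j / ph j) / \<delta>)" using \<delta>_pos by simp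
    also have "\<dots> \<le> \<delta> / ln (1 + \<delta>) * C" using C(2) \<delta>_pos ln by (intro mult_left_mono) auto
    finally have "ln (p j / ph j) / ln (1 + \<delta>) + 1 \<le> (\<delta> / ln (1 + \<delta>) + 1) * C"
      using C(1) by (simp add: algebra_simps)
    thus ?thesis using card_promotion_levels_less[of ph j p, OF assms] unfolding C_def by linarith
  qed
qed

end

section \<open>A lower bound on the optimal total completion time\<close>

definition precedes :: "(nat \<Rightarrow> real) \<Rightarrow> nat \<Rightarrow> nat \<Rightarrow> bool" where
  "precedes C j k \<longleftrightarrow> C j < C k \<or> (C j = C k \<and> j < k)"

lemma precedes_strict_total:
  "irreflp_on A (precedes C)" "transp_on A (precedes C)" "totalp_on A (precedes C)"
  by (auto simp: precedes_def irreflp_on_def transp_on_def totalp_on_def)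

lemma asymp_precedes: "asymp (precedes C)"
  by (auto simp: precedes_def asymp_on_def)

lemma weighted_processed_le_unfinished:
  fixes C :: "nat \<Rightarrow> real"
  assumes "S' t \<subseteq> {..<n}" "card (S' t) \<le> m"
  defines "c j \<equiv> card {k \<in> {..<n}. precedes C j k}"
  shows "(\<Sum>j<n. real (2 * c j + m) * (if t \<le> C j \<and> j \<in> S' t then 1 else 0))
           \<le> 2 * real m * (\<Sum>j<n. if t \<le> C j then 1 else 0)"
proof -
  define U where "U = {j \<in> {..<n}. t \<le> C j}"
  let ?R = "(precedes C)\<inverse>\<inverse>"
  have ord: "irreflp_on U ?R" "transp_on U ?R" "totalp_on U ?R"
    using precedes_strict_total[of U C] by simp_all
  have rank: "c j = order_rank ?R U j" if "j \<in> U" for j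
  proof -
    have "{k \<in> {..<n}. precedes C j k} = {k \<in> U. ?R k j}"
      using that by (auto simp: U_def precedes_def)
    thus ?thesis by (simp add: c_def order_rank_def)
  qed
  have "(\<Sum>j<n. real (2 * c j + m) * (if t \<le> C j \<and> j \<in> S' t then 1 else 0))
          = (\<Sum>j<n. if j \<in> U \<inter> S' t then real (2 * c j + m) else 0)"
    by (intro sum.cong) (auto simp: U_def)
  also have "\<dots> = (\<Sum>j \<in> U \<inter> S' t. real (2 * c j + m))"
  proof -
    have "{..<n} \<inter> (U \<inter> S' t) = U \<inter> S' t" by (auto simp: U_def)
    thus ?thesis using sum.inter_restrict[of "{..<n}" "\<lambda>j. real (2 * c j + m)" "U \<inter> S' t"]
      by (simp only:) simp
  qed
  also have "\<dots> \<le> 2 * real m * real (card U)"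
  proof (rule sum_weighted_processed_le)
    show "inj_on c U" using inj_on_order_rank[OF _ ord] rank by (simp add: U_def inj_on_def)
    show "\<forall>j\<in>U. c j < card U" using order_rank_less_card[OF _ ord(1)] rank by (simp add: U_def)
    show "card (U \<inter> S' t) \<le> m"
      using assms(2) card_mono[OF finite_subset[OF assms(1)], of "U \<inter> S' t"] by auto
  qed (auto simp: U_def)
  also have "real (card U) = (\<Sum>j<n. if t \<le> C j then 1 else 0)"
    by (simp add: U_def sum.inter_filter[symmetric])
  finally show ?thesis .
qed

lemma total_cost_lower_bound:
  assumes feas: "feasible_schedule n m S'" and comp: "\<forall>j<n. completes S' p j"
  defines "c j \<equiv> card {k \<in> {..<n}. precedes (compl_time S' p) j k}"
  shows "(\<Sum>j<n. p j * real (2 * c j + m)) \<le> 2 * real m * total_cost n S' p"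
proof -
  define C where "C = compl_time S' p"
  define T where "T = (\<Sum>j<n. C j)"
  define f where "f j t = (if t \<le> C j \<and> j \<in> S' t then 1 else (0::real))" for j t
  define h where "h j t = (if t \<le> C j then 1 else (0::real))" for j t
  have int: "\<forall>t. indic S' j integrable_on {0..t}" for j
    using feas by (simp add: feasible_schedule_def)
  have C0: "0 \<le> C j" "p j \<le> received S' j (C j)" if "j < n" for j
    using compl_time_reached[OF int comp[rule_format, OF that]] unfolding C_def by auto
  have C: "0 \<le> C j" "C j \<le> T" if "j < n" for j
    unfolding T_def using C0(1) that by (auto intro: member_le_sum)
  have f_int: "(f j has_integral received S' j (C j)) {0..T}" if "j < n" for j
    unfolding f_def using has_integral_received_upto[OF int C[OF that]] .
  have h_int: "(h j has_integral C j) {0..T}" if "j < n" for j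
    unfolding h_def using has_integral_upto[OF C[OF that]] .
  have "(\<Sum>j<n. p j * real (2 * c j + m)) \<le> (\<Sum>j<n. real (2 * c j + m) * received S' j (C j))"
    using C0(2) by (intro sum_mono) (simp add: mult.commute mult_right_mono)
  also have "\<dots> = integral {0..T} (\<lambda>t. \<Sum>j<n. real (2 * c j + m) * f j t)"
    using f_int by (intro integral_unique[symmetric] has_integral_sum has_integral_mult_right) auto
  also have "\<dots> \<le> integral {0..T} (\<lambda>t. 2 * real m * (\<Sum>j<n. h j t))"
  proof (rule integral_le)
    show "(\<lambda>t. \<Sum>j<n. real (2 * c j + m) * f j t) integrable_on {0..T}"
      using f_int by (intro integrable_sum integrable_on_mult_right) (auto simp: has_integral_integrable)
    show "(\<lambda>t. 2 * real m * (\<Sum>j<n. h j t)) integrable_on {0..T}"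
      using h_int by (intro integrable_sum integrable_on_mult_right) (auto simp: has_integral_integrable)
    show "(\<Sum>j<n. real (2 * c j + m) * f j t) \<le> 2 * real m * (\<Sum>j<n. h j t)" for t
      using weighted_processed_le_unfinished[of S' t n m C] feas
      by (simp add: f_def h_def c_def C_def feasible_schedule_def)
  qed
  also have "\<dots> = 2 * real m * total_cost n S' p"
  proof -
    have "((\<lambda>t. \<Sum>j<n. h j t) has_integral total_cost n S' p) {0..T}"
      unfolding total_cost_def C_def[symmetric] using h_int by (intro has_integral_sum) auto
    thus ?thesis by (intro integral_unique has_integral_mult_right)
  qed
  finally show ?thesis .
qed

section \<open>Completion times under PMLF\<close>

locale pmlf_run =
  fixes n m :: nat and \<delta> :: real and p ph :: "nat \<Rightarrow> real"
    and S :: "real \<Rightarrow> nat set" and pos :: "nat \<Rightarrow> int \<Rightarrow> nat"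
  assumes \<delta>_pos: "\<delta> > 0" and m_pos: "1 \<le> m"
    and jobs: "\<And>j. j < n \<Longrightarrow> 1 \<le> p j \<and> 0 < ph j \<and> ph j \<le> p j"
    and run: "is_PMLF n m \<delta> p ph S pos"
begin

abbreviation ahead :: "real \<Rightarrow> nat \<Rightarrow> nat \<Rightarrow> bool" where
  "ahead t k j \<equiv> prio_less \<delta> ph S pos k j t"

lemma feasible: "feasible_schedule n m S"
  using run by (simp add: is_PMLF_def)

lemma integrable: "\<forall>t. indic S j integrable_on {0..t}"
  using feasible by (simp add: feasible_schedule_def)

lemma processed_subset: "S t \<subseteq> {..<n}"
  using feasible by (simp add: feasible_schedule_def)

lemma processed_eq:
  "0 \<le> t \<Longrightarrow> S t = {j. available n p S j t \<and> card {k. available n p S k t \<and> ahead t k j} < m}"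
  using run by (simp add: is_PMLF_def)

lemma processed_available: "0 \<le> t \<Longrightarrow> j \<in> S t \<Longrightarrow> available n p S j t"
  using processed_eq by blast

lemma received_le_p:
  assumes k: "k < n"
  shows "received S k t \<le> p k"
proof (rule ccontr)
  assume "\<not> received S k t \<le> p k"
  moreover have "received S k t = 0" if "t < 0" using that by (rule received_neg)
  ultimately have t: "0 \<le> t" and gt: "p k < received S k t" using jobs[OF k] by force+
  obtain s where s: "0 \<le> s" "s \<le> t" "received S k s = p k"
    using IVT'[of "received S k" 0 "p k" t] received_continuous_on[OF integrable] jobs[OF k] gt t
    by auto
  have "indic S k u = 0" if "u \<in> {s..t}" for u
  proof -
    have "p k \<le> received S k u" using that s received_mono[OF integrable, of s u k] by simp
    thus ?thesis using processed_available[of u k] that s by (auto simp: available_def indic_def)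
  qed
  hence "integral {s..t} (indic S k) = integral {s..t} (\<lambda>_. 0)" by (rule integral_cong)
  hence "integral {s..t} (indic S k) = 0" by simp
  moreover have "received S k s + integral {s..t} (indic S k) = received S k t"
    using s integrable unfolding received_def
    by (intro Henstock_Kurzweil_Integration.integral_combine) auto
  ultimately show False using gt s by simp
qed

lemma ahead_strict_total:
  "irreflp_on A (ahead t)" "transp_on A (ahead t)" "A \<subseteq> {..<n} \<Longrightarrow> totalp_on A (ahead t)"
proof -
  show "irreflp_on A (ahead t)" "transp_on A (ahead t)"
    by (auto simp: prio_less_def irreflp_on_def transp_on_def)
  have "inj_on (\<lambda>j. pos j i) {..<n}" for i
    using run by (simp add: is_PMLF_def valid_positions_def)
  thus "A \<subseteq> {..<n} \<Longrightarrow> totalp_on A (ahead t)"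
    by (auto simp: prio_less_def totalp_on_def inj_on_def) (metis lessThan_iff nat_neq_iff subsetD)
qed

lemma idle_imp_m_ahead:
  assumes t: "0 \<le> t" and ja: "available n p S j t" and jS: "j \<notin> S t"
  shows "m \<le> card {k \<in> S t. ahead t k j}"
proof -
  define A where "A = {k. available n p S k t}"
  have A: "finite A" "A \<subseteq> {..<n}" by (auto simp: A_def available_def intro: finite_subset)
  note ord = ahead_strict_total(1,2)[of A t] ahead_strict_total(3)[OF A(2), of t]
  have St: "S t = {a \<in> A. order_rank (ahead t) A a < m}"
    using processed_eq[OF t] by (simp add: A_def order_rank_def)
  have jA: "j \<in> A" using ja by (simp add: A_def)
  have rank_j: "m \<le> order_rank (ahead t) A j" using jS jA St by auto
  hence "card (S t) = m"
    using St card_order_rank_less[OF A(1) ord, of m] order_rank_less_card[OF A(1) ord(1) jA] by simp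
  moreover have "S t \<subseteq> {k \<in> S t. ahead t k j}"
  proof
    fix a assume aS: "a \<in> S t"
    hence "a \<in> A" "a \<noteq> j" "order_rank (ahead t) A a < m" using St jS by auto
    thus "a \<in> {k \<in> S t. ahead t k j}"
      using aS rank_j ord(3) jA order_rank_less[OF A(1) ord(1,2) jA, of a] by (force simp: totalp_on_def)
  qed
  hence "{k \<in> S t. ahead t k j} = S t" by blast
  ultimately show ?thesis by simp
qed

text \<open>This is where the predictions must be underestimates: the threshold of the queue of \<open>j\<close>
  is at most \<open>max (ph j) (received S j t)\<close>, which is below \<open>p j\<close> because \<open>ph j \<le> p j\<close>.\<close>
lemma ahead_received_less:
  assumes "ahead t k j" and ja: "available n p S j t"
  shows "received S k t < (1 + \<delta>) * p j"
proof -
  have j: "j < n" "received S j t < p j" using ja by (auto simp: available_def)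
  have "received S k t < thr \<delta> (qidx \<delta> ph S k t + 1)"
    unfolding qidx_eq_queue_of by (rule less_thr_queue_of[OF \<delta>_pos])
  also have "\<dots> \<le> thr \<delta> (qidx \<delta> ph S j t + 1)"
    using assms(1) by (auto simp: prio_less_def thr_le_iff[OF \<delta>_pos])
  also have "\<dots> = (1 + \<delta>) * thr \<delta> (qidx \<delta> ph S j t)" by (rule thr_add_one[OF \<delta>_pos])
  also have "\<dots> \<le> (1 + \<delta>) * p j"
    using thr_queue_of_le[OF \<delta>_pos, of ph j "received S j t"] jobs[OF j(1)] j(2) \<delta>_pos
    unfolding qidx_eq_queue_of by (intro mult_left_mono) auto
  finally show ?thesis .
qed

lemma blocked_by_short_jobs:
  assumes "j < n" "0 \<le> t" "t \<le> T" "received S j T < p j" "j \<notin> S t"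
  shows "m \<le> card {k \<in> S t - {j}. received S k t < (1 + \<delta>) * p j}"
proof -
  have ja: "available n p S j t"
    using assms received_mono[OF integrable, of t T j] by (simp add: available_def)
  have "{k \<in> S t. ahead t k j} \<subseteq> {k \<in> S t - {j}. received S k t < (1 + \<delta>) * p j}"
    using ahead_received_less[OF _ ja] by (auto simp: prio_less_def)
  hence "card {k \<in> S t. ahead t k j} \<le> card {k \<in> S t - {j}. received S k t < (1 + \<delta>) * p j}"
    using finite_subset[OF processed_subset] by (intro card_mono) auto
  thus ?thesis using idle_imp_m_ahead[OF assms(2) ja assms(5)] by linarith
qed

lemma busy_or_blocked:
  assumes "j < n" "0 \<le> t" "t \<le> T" "received S j T < p j"
    and "\<And>k. received S k t < (1 + \<delta>) * p j \<Longrightarrow> t \<le> \<tau> k"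
  shows "1 \<le> indic S j t + (\<Sum>k\<in>{..<n} - {j}. if t \<le> \<tau> k \<and> k \<in> S t then 1 else 0) / m"
proof (cases "j \<in> S t")
  case True
  thus ?thesis by (simp add: indic_def sum_nonneg)
next
  case False
  define K where "K = {k \<in> S t - {j}. received S k t < (1 + \<delta>) * p j}"
  have "real m \<le> real (card K)" using blocked_by_short_jobs[OF assms(1-4) False] by (simp add: K_def)
  also have "\<dots> = (\<Sum>k\<in>K. if t \<le> \<tau> k \<and> k \<in> S t then 1 else 0)"
    using assms(5) by (simp add: K_def)
  also have "\<dots> \<le> (\<Sum>k\<in>{..<n} - {j}. if t \<le> \<tau> k \<and> k \<in> S t then 1 else 0)"
    using processed_subset by (intro sum_mono2) (auto simp: K_def)
  finally show ?thesis using m_pos False by (simp add: field_simps indic_def)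
qed

text \<open>While \<open>j\<close> is unfinished, at each instant either \<open>j\<close> runs or \<open>m\<close> jobs that have received
  less than \<open>(1 + \<delta>) p j\<close> run, and each other job \<open>k\<close> can do so for at most
  \<open>min (p k) ((1 + \<delta>) p j)\<close> time units.\<close>
lemma unfinished_time_bound:
  assumes j: "j < n" and T: "0 \<le> T" and unfinished: "received S j T < p j"
  shows "T \<le> received S j T + (\<Sum>k\<in>{..<n} - {j}. min (p k) ((1 + \<delta>) * p j)) / m"
proof -
  define B where "B = (1 + \<delta>) * p j"
  have "0 \<le> B" unfolding B_def using \<delta>_pos jobs[OF j] by simp
  have "\<exists>\<tau>. 0 \<le> \<tau> \<and> \<tau> \<le> T \<and> received S k \<tau> \<le> B \<and>
          (\<forall>t. 0 \<le> t \<longrightarrow> t \<le> T \<longrightarrow> received S k t < B \<longrightarrow> t \<le> \<tau>)" for k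
    using last_time_below[OF integrable T \<open>0 \<le> B\<close>, of k] by metis
  then obtain \<tau> where \<tau>: "\<And>k. 0 \<le> \<tau> k \<and> \<tau> k \<le> T \<and> received S k (\<tau> k) \<le> B"
    and below: "\<And>k t. 0 \<le> t \<Longrightarrow> t \<le> T \<Longrightarrow> received S k t < B \<Longrightarrow> t \<le> \<tau> k"
    by metis
  define g where "g k t = (if t \<le> \<tau> k \<and> k \<in> S t then 1 else (0::real))" for k t
  have "(g k has_integral received S k (\<tau> k)) {0..T}" for k
    unfolding g_def using has_integral_received_upto[OF integrable] \<tau>[of k] by blast
  hence g_integrable: "g k integrable_on {0..T}"
    and g_integral: "integral {0..T} (g k) = received S k (\<tau> k)" for k
    by (auto intro: integral_unique)
  have pointwise: "1 \<le> indic S j t + (\<Sum>k\<in>{..<n} - {j}. g k t) / m" if "t \<in> {0..T}" for t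
    using busy_or_blocked[OF j _ _ unfinished, of t \<tau>] below that unfolding g_def B_def by auto
  have "T = integral {0..T} (\<lambda>_. 1::real)" using T by simp
  also have "\<dots> \<le> integral {0..T} (\<lambda>t. indic S j t + (\<Sum>k\<in>{..<n} - {j}. g k t) / m)"
    using pointwise integrable g_integrable
    by (intro integral_le integrable_add integrable_on_divide integrable_sum) auto
  also have "\<dots> = received S j T + (\<Sum>k\<in>{..<n} - {j}. integral {0..T} (g k)) / m"
    using integrable g_integrable
    by (simp add: received_def integral_add integral_divide integral_sum integrable_on_divide integrable_sum)
  also have "\<dots> \<le> received S j T + (\<Sum>k\<in>{..<n} - {j}. min (p k) B) / m"
    using \<tau> received_le_p m_pos
    by (intro add_left_mono divide_right_mono sum_mono) (auto simp: g_integral)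
  finally show ?thesis unfolding B_def .
qed

definition completion_bound :: "nat \<Rightarrow> real" where
  "completion_bound j = p j + (\<Sum>k\<in>{..<n} - {j}. min (p k) ((1 + \<delta>) * p j)) / m"

lemma completion_bound_reached:
  assumes j: "j < n"
  shows "0 \<le> completion_bound j" "p j \<le> received S j (completion_bound j)"
proof -
  have "0 \<le> min (p k) ((1 + \<delta>) * p j)" if "k < n" for k
    using jobs[OF j] jobs[OF that] \<delta>_pos by simp
  hence "0 \<le> (\<Sum>k\<in>{..<n} - {j}. min (p k) ((1 + \<delta>) * p j)) / m"
    by (intro divide_nonneg_nonneg sum_nonneg) auto
  thus "0 \<le> completion_bound j" using jobs[OF j] by (simp add: completion_bound_def)
  thus "p j \<le> received S j (completion_bound j)"
    using unfinished_time_bound[OF j] by (force simp: completion_bound_def)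
qed

lemma completes_job: "j < n \<Longrightarrow> completes S p j"
  using completion_bound_reached unfolding completes_def by blast

lemma compl_time_le_bound: "j < n \<Longrightarrow> compl_time S p j \<le> completion_bound j"
  using completion_bound_reached by (intro compl_time_le)

lemma total_cost_upper_bound:
  "total_cost n S p \<le> (\<Sum>j<n. p j) + (1 + \<delta>) * (\<Sum>j<n. \<Sum>k\<in>{..<n} - {j}. min (p j) (p k)) / m"
proof -
  have "min (p k) ((1 + \<delta>) * p j) \<le> (1 + \<delta>) * min (p j) (p k)" if "k < n" for j k
  proof (cases "p j \<le> p k")
    case False
    moreover have "p k \<le> (1 + \<delta>) * p k" using jobs[OF that] \<delta>_pos by (simp add: algebra_simps)
    ultimately show ?thesis by (simp add: min_def)
  qed (simp add: min_def)
  hence "(\<Sum>j<n. \<Sum>k\<in>{..<n} - {j}. min (p k) ((1 + \<delta>) * p j))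
           \<le> (1 + \<delta>) * (\<Sum>j<n. \<Sum>k\<in>{..<n} - {j}. min (p j) (p k))"
    unfolding sum_distrib_left by (intro sum_mono) auto
  hence "(\<Sum>j<n. \<Sum>k\<in>{..<n} - {j}. min (p k) ((1 + \<delta>) * p j)) / m
           \<le> (1 + \<delta>) * (\<Sum>j<n. \<Sum>k\<in>{..<n} - {j}. min (p j) (p k)) / m"
    using m_pos by (intro divide_right_mono) auto
  moreover have "(\<Sum>j<n. completion_bound j)
      = (\<Sum>j<n. p j) + (\<Sum>j<n. \<Sum>k\<in>{..<n} - {j}. min (p k) ((1 + \<delta>) * p j)) / m"
    by (simp add: completion_bound_def sum.distrib sum_divide_distrib)
  moreover have "total_cost n S p \<le> (\<Sum>j<n. completion_bound j)"
    unfolding total_cost_def by (intro sum_mono compl_time_le_bound) simp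
  ultimately show ?thesis by linarith
qed

theorem PMLF_competitive:
  assumes "feasible_schedule n m S'" "\<forall>j<n. completes S' p j"
  shows "total_cost n S p \<le> (2 + 2 * \<delta>) * total_cost n S' p"
proof -
  define c where "c j = card {k \<in> {..<n}. precedes (compl_time S' p) j k}" for j
  define P where "P = (\<Sum>j<n. p j)"
  have "0 \<le> P" unfolding P_def using jobs by (intro sum_nonneg) force
  have "total_cost n S p \<le> P + (1 + \<delta>) * (\<Sum>j<n. \<Sum>k\<in>{..<n} - {j}. min (p j) (p k)) / m"
    unfolding P_def by (rule total_cost_upper_bound)
  also have "\<dots> \<le> P + (1 + \<delta>) * (2 * (\<Sum>j<n. p j * c j)) / m"
    using sum_min_pairs_le[OF _ asymp_precedes, of "{..<n}" "compl_time S' p" p]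
      precedes_strict_total(3) \<delta>_pos m_pos
    by (intro add_left_mono divide_right_mono mult_left_mono) (auto simp: c_def)
  also have "\<dots> \<le> (1 + \<delta>) * P + (1 + \<delta>) * (2 * (\<Sum>j<n. p j * c j)) / m"
    using \<delta>_pos \<open>0 \<le> P\<close> by (simp add: algebra_simps)
  also have "\<dots> = (1 + \<delta>) / m * (\<Sum>j<n. p j * real (2 * c j + m))"
  proof -
    have "(\<Sum>j<n. p j * real (2 * c j + m)) = real m * P + 2 * (\<Sum>j<n. p j * c j)"
      by (simp add: P_def sum.distrib sum_distrib_left algebra_simps)
    thus ?thesis using m_pos by (simp add: field_simps)
  qed
  also have "\<dots> \<le> (1 + \<delta>) / m * (2 * real m * total_cost n S' p)"
    using total_cost_lower_bound[OF assms] \<delta>_pos by (intro mult_left_mono) (auto simp: c_def)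
  also have "\<dots> = (2 + 2 * \<delta>) * total_cost n S' p" using m_pos by (simp add: field_simps)
  finally show ?thesis .
qed

end

section \<open>Preemptions\<close>

context pmlf_run
begin

lemma received_less_before_completion:
  "0 \<le> t \<Longrightarrow> t < compl_time S p j \<Longrightarrow> received S j t < p j"
  using compl_time_le[of t p j S] by fastforce

lemma qidx_mono: "a \<le> b \<Longrightarrow> qidx \<delta> ph S j a \<le> qidx \<delta> ph S j b"
  unfolding qidx_eq_queue_of by (intro queue_of_mono[OF \<delta>_pos] received_mono[OF integrable])

lemma ahead_earlier:
  assumes "u \<le> s" "qidx \<delta> ph S j u = qidx \<delta> ph S j s" "ahead s k j"
  shows "ahead u k j"
  using assms qidx_mono[OF assms(1), of k] by (auto simp: prio_less_def)

lemma queue_stable_right: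
  assumes "j < n" "0 \<le> t" "received S j t < p j"
  obtains \<eta> where "\<eta> > 0"
    "\<And>s. t \<le> s \<Longrightarrow> s < t + \<eta> \<Longrightarrow> qidx \<delta> ph S j s = qidx \<delta> ph S j t \<and> available n p S j s"
proof
  let ?r = "received S j t"
  let ?i = "qidx \<delta> ph S j t"
  define \<eta> where "\<eta> = min (thr \<delta> (?i + 1) - ?r) (p j - ?r)"
  show "\<eta> > 0"
    using assms(3) less_thr_queue_of[OF \<delta>_pos] by (simp add: \<eta>_def qidx_eq_queue_of)
  fix s assume s: "t \<le> s" "s < t + \<eta>"
  have "?r \<le> received S j s" "received S j s - ?r \<le> s - t"
    using received_increment_bounds[OF integrable s(1)] by auto
  thus "qidx \<delta> ph S j s = qidx \<delta> ph S j t \<and> available n p S j s"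
    using s(2) assms(1) queue_of_eq[OF \<delta>_pos, of ?r "received S j s" ph j]
    by (simp add: \<eta>_def available_def qidx_eq_queue_of)
qed

text \<open>A job is preempted only at the instant it enters a new queue: otherwise the jobs ahead of
  it just after the preemption were already ahead of it just before, when it was processed.\<close>
lemma preemption_at_promotion:
  assumes j: "j < n" and pr: "preempt_at S p j t" and "\<epsilon> > 0"
  shows "\<exists>u. t - \<epsilon> < u \<and> u < t \<and> qidx \<delta> ph S j u < qidx \<delta> ph S j t"
proof (rule ccontr)
  assume "\<not> ?thesis"
  hence same_before: "qidx \<delta> ph S j u = qidx \<delta> ph S j t" if "t - \<epsilon> < u" "u < t" for u
    using that qidx_mono[of u t j] by force
  have t: "0 < t" and "t < compl_time S p j" using pr by (auto simp: preempt_at_def)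
  hence "received S j t < p j" by (intro received_less_before_completion) auto
  then obtain \<eta> where "\<eta> > 0" and same_after:
    "\<And>s. t \<le> s \<Longrightarrow> s < t + \<eta> \<Longrightarrow> qidx \<delta> ph S j s = qidx \<delta> ph S j t \<and> available n p S j s"
    using queue_stable_right[OF j] t by (metis less_imp_le)
  then obtain s where s: "t \<le> s" "s < t + \<eta>" "j \<notin> S s"
    using pr by (auto simp: preempt_at_def)
  obtain \<epsilon>' where "\<epsilon>' > 0" and running: "\<And>u. t - \<epsilon>' < u \<Longrightarrow> u < t \<Longrightarrow> j \<in> S u"
    using pr by (auto simp: preempt_at_def)
  define u where "u = t - min (min \<epsilon> \<epsilon>') t / 2"
  have u: "0 \<le> u" "u < t" "t - \<epsilon> < u" "t - \<epsilon>' < u"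
    unfolding u_def using \<open>\<epsilon> > 0\<close> \<open>\<epsilon>' > 0\<close> t by (auto simp: min_def)
  have "{k \<in> S s. ahead s k j} \<subseteq> {k. available n p S k u \<and> ahead u k j}"
  proof safe
    fix k assume "k \<in> S s" "ahead s k j"
    have "received S k u \<le> received S k s" using u s by (intro received_mono[OF integrable]) auto
    thus "available n p S k u"
      using processed_available[OF _ \<open>k \<in> S s\<close>] u s by (auto simp: available_def)
    have "qidx \<delta> ph S j u = qidx \<delta> ph S j s"
      using same_before[OF u(3,2)] same_after[OF s(1,2)] by simp
    thus "ahead u k j" using ahead_earlier[OF _ _ \<open>ahead s k j\<close>] u s by simp
  qed
  hence "card {k \<in> S s. ahead s k j} \<le> card {k. available n p S k u \<and> ahead u k j}"
    by (intro card_mono) (auto simp: available_def)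
  moreover have "m \<le> card {k \<in> S s. ahead s k j}"
    using idle_imp_m_ahead s same_after u t by auto
  moreover have "card {k. available n p S k u \<and> ahead u k j} < m"
    using running[OF u(4,2)] processed_eq[OF u(1)] by auto
  ultimately show False by linarith
qed

lemma preemption_level:
  assumes "j < n" "preempt_at S p j t"
  shows "qidx \<delta> ph S j t \<in> promotion_levels \<delta> ph p j"
proof -
  obtain u where "qidx \<delta> ph S j u < qidx \<delta> ph S j t"
    using preemption_at_promotion[OF assms, of 1] by auto
  hence above: "kinit \<delta> ph j < qidx \<delta> ph S j t"
    using kinit_le_queue_of[OF \<delta>_pos] unfolding qidx_eq_queue_of by (meson order_le_less_trans)
  have "thr \<delta> (qidx \<delta> ph S j t) \<le> received S j t"
    using le_queue_of_iff[OF \<delta>_pos above[unfolded qidx_eq_queue_of], of "received S j t"]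
    by (simp add: qidx_eq_queue_of)
  moreover have "received S j t < p j"
    using assms(2) by (auto simp: preempt_at_def intro: received_less_before_completion)
  ultimately show ?thesis using above by (simp add: promotion_levels_def)
qed

lemma inj_on_qidx_preemptions:
  assumes "j < n"
  shows "inj_on (qidx \<delta> ph S j) {t. preempt_at S p j t}"
proof -
  have less: "qidx \<delta> ph S j a < qidx \<delta> ph S j b" if ab: "a < b" and pb: "preempt_at S p j b" for a b
  proof -
    obtain u where "a < u" "qidx \<delta> ph S j u < qidx \<delta> ph S j b"
      using preemption_at_promotion[OF assms pb, of "b - a"] ab by auto
    thus ?thesis using qidx_mono[of a u j] by simp
  qed
  show ?thesis
  proof (rule inj_onI)
    fix a b assume "a \<in> {t. preempt_at S p j t}" "b \<in> {t. preempt_at S p j t}"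
      and "qidx \<delta> ph S j a = qidx \<delta> ph S j b"
    thus "a = b" using less[of a b] less[of b a] by (cases a b rule: linorder_cases) auto
  qed
qed

theorem finite_preemptions:
  assumes "j < n"
  shows "finite {t. preempt_at S p j t}"
proof (rule finite_imageD[OF _ inj_on_qidx_preemptions[OF assms]])
  show "finite (qidx \<delta> ph S j ` {t. preempt_at S p j t})"
    using preemption_level[OF assms] by (intro finite_subset[OF _ finite_promotion_levels[OF \<delta>_pos]]) auto
qed

theorem num_preemptions_le:
  assumes "j < n"
  shows "real (num_preemptions S p j) \<le> (\<delta> / ln (1 + \<delta>) + 1) * \<lceil>ln (p j / ph j) / \<delta>\<rceil>"
proof -
  have "num_preemptions S p j \<le> card (promotion_levels \<delta> ph p j)"
    unfolding num_preemptions_def using preemption_level[OF assms]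
    by (intro card_inj_on_le[OF inj_on_qidx_preemptions[OF assms]] finite_promotion_levels[OF \<delta>_pos]) auto
  thus ?thesis using card_promotion_levels_le[OF \<delta>_pos, of ph j p] jobs[OF assms] by linarith
qed

theorem PMLF_guarantees:
  "(\<forall>j<n. completes S p j) \<and>
   (\<forall>S'. feasible_schedule n m S' \<and> (\<forall>j<n. completes S' p j) \<longrightarrow>
      total_cost n S p \<le> (2 + 2 * \<delta>) * total_cost n S' p) \<and>
   (\<forall>j<n. finite {t. preempt_at S p j t}) \<and>
   real (\<Sum>j<n. num_preemptions S p j)
      \<le> (\<delta> / ln (1 + \<delta>) + 1) * (\<Sum>j<n. of_int \<lceil>ln (p j / ph j) / \<delta>\<rceil>)"
proof -
  have "(\<Sum>j<n. real (num_preemptions S p j)) \<le> (\<Sum>j<n. (\<delta> / ln (1 + \<delta>) + 1) * \<lceil>ln (p j / ph j) / \<delta>\<rceil>)"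
    by (intro sum_mono num_preemptions_le) simp
  thus ?thesis using completes_job PMLF_competitive finite_preemptions by (simp add: sum_distrib_left)
qed

end

section \<open>Existence of PMLF schedules\<close>

lemma reached_mono:
  assumes "\<forall>t. indic S j integrable_on {0..t}" "s \<le> s'" "reached \<delta> ph S j i s"
  shows "reached \<delta> ph S j i s'"
  using assms received_mono[OF assms(1,2)] by (auto simp: reached_def)

lemma asymp_enters_before:
  assumes "\<And>j. \<forall>t. indic S j integrable_on {0..t}"
  shows "asymp (\<lambda>a b. enters_before \<delta> ph S a b i)"
proof (rule asympI)
  fix a b assume "enters_before \<delta> ph S a b i"
  show "\<not> enters_before \<delta> ph S b a i"
  proof
    assume "enters_before \<delta> ph S b a i"
    with \<open>enters_before \<delta> ph S a b i\<close> obtain s s'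
      where s: "reached \<delta> ph S a i s" "\<not> reached \<delta> ph S b i s"
      and s': "reached \<delta> ph S b i s'" "\<not> reached \<delta> ph S a i s'"
      by (auto simp: enters_before_def)
    show False
    proof (cases "s \<le> s'")
      case True thus False using reached_mono[OF assms True s(1)] s'(2) by simp
    next
      case False thus False using reached_mono[OF assms _ s'(1), of s] s(2) by simp
    qed
  qed
qed

lemma enters_before_negtrans:
  "enters_before \<delta> ph S a c i \<Longrightarrow> enters_before \<delta> ph S a b i \<or> enters_before \<delta> ph S b c i"
  by (auto simp: enters_before_def)

locale pmlf_sim =
  fixes n m :: nat and \<delta> :: real and p ph :: "nat \<Rightarrow> real"
  assumes \<delta>_pos: "\<delta> > 0"
begin

abbreviation q :: "nat \<Rightarrow> real \<Rightarrow> int" where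
  "q \<equiv> queue_of \<delta> ph"

text \<open>A simulation state records the current time, the processing \<open>r\<close> received so far and the
  time \<open>e\<close> at which each job entered its current queue; a queue is served in order of entry,
  simultaneous entries by job index. Between two events (a completion or a promotion) the set of
  processed jobs does not change.\<close>

definition unfinished :: "(nat \<Rightarrow> real) \<Rightarrow> nat \<Rightarrow> bool" where
  "unfinished r j \<longleftrightarrow> j < n \<and> r j < p j"

definition sim_before :: "(nat \<Rightarrow> real) \<Rightarrow> (nat \<Rightarrow> real) \<Rightarrow> nat \<Rightarrow> nat \<Rightarrow> bool" where
  "sim_before r e a b \<longleftrightarrow> q a (r a) < q b (r b) \<or>
     (q a (r a) = q b (r b) \<and> (e a < e b \<or> (e a = e b \<and> a < b)))"

definition running :: "(nat \<Rightarrow> real) \<Rightarrow> (nat \<Rightarrow> real) \<Rightarrow> nat set" where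
  "running r e = {j. unfinished r j \<and> card {k. unfinished r k \<and> sim_before r e k j} < m}"

definition slack :: "(nat \<Rightarrow> real) \<Rightarrow> nat \<Rightarrow> real" where
  "slack r j = min (p j - r j) (thr \<delta> (q j (r j) + 1) - r j)"

definition step_length :: "(nat \<Rightarrow> real) \<Rightarrow> (nat \<Rightarrow> real) \<Rightarrow> real" where
  "step_length r e = (if running r e = {} then 1 else Min (slack r ` running r e))"

definition sim_step :: "real \<times> (nat \<Rightarrow> real) \<times> (nat \<Rightarrow> real) \<Rightarrow> real \<times> (nat \<Rightarrow> real) \<times> (nat \<Rightarrow> real)" where
  "sim_step = (\<lambda>(t, r, e).
     let d = step_length r e; r' = (\<lambda>j. if j \<in> running r e then r j + d else r j)
     in (t + d, r', \<lambda>j. if q j (r' j) \<noteq> q j (r j) then t + d else e j))"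

definition sim_state :: "nat \<Rightarrow> real \<times> (nat \<Rightarrow> real) \<times> (nat \<Rightarrow> real)" where
  "sim_state k = (sim_step ^^ k) (0, \<lambda>_. 0, \<lambda>_. 0)"

definition event_time :: "nat \<Rightarrow> real" where "event_time k = fst (sim_state k)"
definition recv :: "nat \<Rightarrow> nat \<Rightarrow> real" where "recv k = fst (snd (sim_state k))"
definition entry_time :: "nat \<Rightarrow> nat \<Rightarrow> real" where "entry_time k = snd (snd (sim_state k))"

abbreviation runs :: "nat \<Rightarrow> nat set" where "runs k \<equiv> running (recv k) (entry_time k)"
abbreviation dur :: "nat \<Rightarrow> real" where "dur k \<equiv> step_length (recv k) (entry_time k)"

lemma sim_state_0 [simp]: "event_time 0 = 0" "recv 0 = (\<lambda>_. 0)" "entry_time 0 = (\<lambda>_. 0)"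
  by (simp_all add: event_time_def recv_def entry_time_def sim_state_def)

lemma sim_state_Suc:
  "event_time (Suc k) = event_time k + dur k"
  "recv (Suc k) j = (if j \<in> runs k then recv k j + dur k else recv k j)"
  "entry_time (Suc k) j =
     (if q j (recv (Suc k) j) \<noteq> q j (recv k j) then event_time (Suc k) else entry_time k j)"
proof -
  have step: "sim_state (Suc k) = sim_step (event_time k, recv k, entry_time k)"
    by (simp add: sim_state_def event_time_def recv_def entry_time_def)
  show "event_time (Suc k) = event_time k + dur k"
    by (simp add: step sim_step_def Let_def event_time_def[of "Suc k"])
  show "recv (Suc k) j = (if j \<in> runs k then recv k j + dur k else recv k j)"
    by (simp add: step sim_step_def Let_def recv_def[of "Suc k"])
  thus "entry_time (Suc k) j =
     (if q j (recv (Suc k) j) \<noteq> q j (recv k j) then event_time (Suc k) else entry_time k j)"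
    by (simp add: step sim_step_def Let_def entry_time_def[of "Suc k"] event_time_def[of "Suc k"])
qed

lemma running_subset: "running r e \<subseteq> {..<n}"
  by (auto simp: running_def unfinished_def)

lemma finite_running: "finite (running r e)"
  using running_subset finite_subset by blast

lemma running_unfinished: "j \<in> running r e \<Longrightarrow> unfinished r j"
  by (simp add: running_def)

lemma step_length_pos: "0 < step_length r e"
proof (cases "running r e = {}")
  case False
  hence "Min (slack r ` running r e) \<in> slack r ` running r e"
    using finite_running by (intro Min_in) auto
  moreover have "0 < slack r j" if "j \<in> running r e" for j
    using running_unfinished[OF that] less_thr_queue_of[OF \<delta>_pos, of "r j" ph j]
    by (simp add: slack_def unfinished_def)
  ultimately show ?thesis using False by (auto simp: step_length_def)
qed (simp add: step_length_def)

lemma step_length_le_slack: "j \<in> running r e \<Longrightarrow> step_length r e \<le> slack r j"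
  using finite_running by (auto simp: step_length_def intro: Min_le)

lemma strict_mono_event_time: "strict_mono event_time"
  using step_length_pos by (intro strict_monoI_Suc) (simp add: sim_state_Suc)

lemma event_time_nonneg: "0 \<le> event_time k"
  using strict_mono_leD[OF strict_mono_event_time, of 0 k] by simp

lemma recv_mono_Suc: "recv k j \<le> recv (Suc k) j"
  using step_length_pos[of "recv k" "entry_time k"] by (simp add: sim_state_Suc)

lemma recv_Suc_le_thr: "j \<in> runs k \<Longrightarrow> recv (Suc k) j \<le> thr \<delta> (q j (recv k j) + 1)"
  using step_length_le_slack by (force simp: sim_state_Suc slack_def)

definition events_left :: "nat \<Rightarrow> real \<Rightarrow> nat" where
  "events_left j x = card {i \<in> promotion_levels \<delta> ph p j. x < thr \<delta> i} + (if x < p j then 1 else 0)"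

definition potential :: "nat \<Rightarrow> nat" where
  "potential k = (\<Sum>j<n. events_left j (recv k j))"

lemma events_left_antimono:
  assumes "x \<le> y"
  shows "events_left j y \<le> events_left j x"
proof -
  have "card {i \<in> promotion_levels \<delta> ph p j. y < thr \<delta> i} \<le> card {i \<in> promotion_levels \<delta> ph p j. x < thr \<delta> i}"
    using assms finite_promotion_levels[OF \<delta>_pos] by (intro card_mono) auto
  thus ?thesis using assms by (simp add: events_left_def)
qed

text \<open>The job attaining the minimal slack completes or is promoted.\<close>
lemma potential_decreases:
  assumes "runs k \<noteq> {}"
  shows "potential (Suc k) < potential k"
proof -
  have "dur k \<in> slack (recv k) ` runs k"
    using assms finite_running by (auto simp: step_length_def intro: Min_in)
  then obtain j where j: "j \<in> runs k" "dur k = slack (recv k) j" by auto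
  define i where "i = q j (recv k j)"
  have unf: "unfinished (recv k) j" by (rule running_unfinished[OF j(1)])
  have next_j: "recv (Suc k) j = min (p j) (thr \<delta> (i + 1))"
    using j by (auto simp: sim_state_Suc slack_def i_def)
  let ?I = "\<lambda>x. {i \<in> promotion_levels \<delta> ph p j. x < thr \<delta> i}"
  have fin: "finite (?I x)" for x using finite_promotion_levels[OF \<delta>_pos] by simp
  have "events_left j (recv (Suc k) j) < events_left j (recv k j)"
  proof (cases "p j \<le> thr \<delta> (i + 1)")
    case True
    hence "recv (Suc k) j = p j" using next_j by simp
    moreover have "card (?I (p j)) \<le> card (?I (recv k j))"
      using unf fin by (intro card_mono) (auto simp: unfinished_def)
    ultimately show ?thesis using unf by (simp add: events_left_def unfinished_def)
  next
    case False
    hence next_thr: "recv (Suc k) j = thr \<delta> (i + 1)" using next_j by simp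
    have "i + 1 \<in> ?I (recv k j)" "i + 1 \<notin> ?I (recv (Suc k) j)"
      using False next_thr kinit_le_queue_of[OF \<delta>_pos, of ph j] less_thr_queue_of[OF \<delta>_pos]
      by (auto simp: promotion_levels_def i_def intro: le_less_trans)
    moreover have "?I (recv (Suc k) j) \<subseteq> ?I (recv k j)" using recv_mono_Suc[of k j] by auto
    ultimately have "card (?I (recv (Suc k) j)) < card (?I (recv k j))"
      using fin by (intro psubset_card_mono) auto
    thus ?thesis using False next_thr unf by (simp add: events_left_def unfinished_def)
  qed
  moreover have "j < n" using unf by (simp add: unfinished_def)
  ultimately show ?thesis
    unfolding potential_def by (intro sum_strict_mono_ex1) (auto intro: events_left_antimono recv_mono_Suc)
qed

text \<open>A step lasts one time unit when nothing runs, and otherwise consumes potential.\<close>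
lemma event_time_lower_bound: "real k + real (potential k) \<le> event_time k + real (potential 0)"
proof (induction k)
  case (Suc k)
  show ?case
  proof (cases "runs k = {}")
    case True
    hence "dur k = 1" "recv (Suc k) = recv k" by (auto simp: step_length_def sim_state_Suc)
    thus ?thesis using Suc by (simp add: sim_state_Suc potential_def)
  next
    case False
    hence "real (potential (Suc k)) + 1 \<le> real (potential k)" using potential_decreases by fastforce
    thus ?thesis using Suc step_length_pos[of "recv k" "entry_time k"] by (simp add: sim_state_Suc)
  qed
qed simp

lemma event_time_unbounded: "\<exists>k. t < event_time k"
proof
  let ?k = "nat \<lceil>t + real (potential 0)\<rceil> + 1"
  show "t < event_time ?k" using event_time_lower_bound[of ?k] by linarith
qed

definition epoch :: "real \<Rightarrow> nat" where
  "epoch t = (LEAST k. t < event_time (Suc k))"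

lemma epoch_eq:
  assumes "event_time k \<le> t" "t < event_time (Suc k)"
  shows "epoch t = k"
  unfolding epoch_def
proof (rule Least_equality)
  fix k' assume "t < event_time (Suc k')"
  thus "k \<le> k'" using assms(1) strict_mono_less_eq[OF strict_mono_event_time, of "Suc k'" k] by linarith
qed fact

lemma epoch_bounds:
  assumes "0 \<le> t"
  shows "event_time (epoch t) \<le> t" "t < event_time (Suc (epoch t))"
proof -
  obtain k where "t < event_time k" using event_time_unbounded by blast
  hence "t < event_time (Suc k)" using strict_mono_event_time by (meson lessI order.strict_trans strict_monoD)
  thus "t < event_time (Suc (epoch t))" unfolding epoch_def by (rule LeastI)
  show "event_time (epoch t) \<le> t"
  proof (cases "epoch t")
    case (Suc k')
    thus ?thesis using not_less_Least[of k' "\<lambda>k. t < event_time (Suc k)"] by (simp add: epoch_def)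
  qed (use assms in simp)
qed

definition sim_schedule :: "real \<Rightarrow> nat set" where
  "sim_schedule t = (if t < 0 then {} else runs (epoch t))"

lemma sim_schedule_eq: "event_time k \<le> t \<Longrightarrow> t < event_time (Suc k) \<Longrightarrow> sim_schedule t = runs k"
  using event_time_nonneg[of k] epoch_eq by (simp add: sim_schedule_def)

lemma has_integral_indic_epoch:
  assumes "event_time k \<le> t" "t \<le> event_time (Suc k)"
  shows "(indic sim_schedule j has_integral (t - event_time k) * of_bool (j \<in> runs k)) {event_time k..t}"
proof (rule has_integral_spike_finite[of "{t}" _ _ "\<lambda>_. of_bool (j \<in> runs k)"])
  show "((\<lambda>_. of_bool (j \<in> runs k)) has_integral (t - event_time k) * of_bool (j \<in> runs k))
          {event_time k..t}"
  proof (cases "j \<in> runs k")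
    case True
    thus ?thesis using has_integral_const_real[of "1::real" "event_time k" t] assms by simp
  qed simp
  show "indic sim_schedule j x = of_bool (j \<in> runs k)" if "x \<in> {event_time k..t} - {t}" for x
    using that assms sim_schedule_eq[of k x] by (simp add: indic_def)
qed simp

lemma has_integral_indic_sim_schedule:
  "event_time k \<le> t \<Longrightarrow> t \<le> event_time (Suc k) \<Longrightarrow>
     (indic sim_schedule j has_integral recv k j + (t - event_time k) * of_bool (j \<in> runs k)) {0..t}"
proof (induction k arbitrary: t)
  case 0
  thus ?case using has_integral_indic_epoch[OF 0, of j] by simp
next
  case (Suc k)
  have "(indic sim_schedule j has_integral recv (Suc k) j) {0..event_time (Suc k)}"
    using Suc.IH[of "event_time (Suc k)"] strict_monoD[OF strict_mono_event_time, of k "Suc k"]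
    by (cases "j \<in> runs k") (simp_all add: sim_state_Suc)
  thus ?case
    using has_integral_combine[OF event_time_nonneg Suc.prems(1) _ has_integral_indic_epoch[OF Suc.prems]]
    by simp
qed

lemma received_sim_schedule:
  "event_time k \<le> t \<Longrightarrow> t \<le> event_time (Suc k) \<Longrightarrow>
     received sim_schedule j t = recv k j + (t - event_time k) * of_bool (j \<in> runs k)"
  using has_integral_indic_sim_schedule by (simp add: received_def integral_unique)

lemma received_event_time: "received sim_schedule j (event_time k) = recv k j"
  using received_sim_schedule[of k "event_time k" j] strict_monoD[OF strict_mono_event_time, of k "Suc k"]
  by simp

lemma sim_integrable: "\<forall>t. indic sim_schedule j integrable_on {0..t}"
proof
  fix t :: real
  show "indic sim_schedule j integrable_on {0..t}"
  proof (cases "t < 0")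
    case False
    thus ?thesis using epoch_bounds[of t] has_integral_indic_sim_schedule[of "epoch t" t j] by force
  qed (simp add: integrable_on_def has_integral_empty)
qed

lemma sim_before_strict_total:
  "irreflp_on A (sim_before r e)" "transp_on A (sim_before r e)" "totalp_on A (sim_before r e)"
  unfolding sim_before_def irreflp_on_def transp_on_def totalp_on_def by auto

lemma card_running_le: "card (running r e) \<le> m"
proof -
  define A where "A = {k. unfinished r k}"
  have "finite A" by (auto simp: A_def unfinished_def)
  have "running r e = {a \<in> A. order_rank (sim_before r e) A a < m}"
    by (simp add: running_def A_def order_rank_def)
  thus ?thesis using card_order_rank_less[OF \<open>finite A\<close> sim_before_strict_total] by simp
qed

lemma sim_feasible: "feasible_schedule n m sim_schedule"
  using running_subset card_running_le sim_integrable
  by (auto simp: feasible_schedule_def sim_schedule_def)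

lemma sim_state_between_events:
  assumes "event_time k \<le> t" "t < event_time (Suc k)"
  shows "available n p sim_schedule j t \<longleftrightarrow> unfinished (recv k) j"
    and "qidx \<delta> ph sim_schedule j t = q j (recv k j)"
proof -
  have rec: "received sim_schedule j t = recv k j + (t - event_time k) * of_bool (j \<in> runs k)"
    using received_sim_schedule assms by simp
  have "(available n p sim_schedule j t \<longleftrightarrow> unfinished (recv k) j) \<and>
        qidx \<delta> ph sim_schedule j t = q j (recv k j)"
  proof (cases "j \<in> runs k")
    case True
    have "t - event_time k < slack (recv k) j"
      using assms step_length_le_slack[OF True] by (simp add: sim_state_Suc)
    hence "received sim_schedule j t < p j" "received sim_schedule j t < thr \<delta> (q j (recv k j) + 1)"
      using rec True by (auto simp: slack_def)
    moreover have "recv k j \<le> received sim_schedule j t" using rec assms by simp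
    ultimately show ?thesis
      using running_unfinished[OF True] queue_of_eq[OF \<delta>_pos]
      by (simp add: available_def unfinished_def qidx_eq_queue_of)
  next
    case False
    thus ?thesis using rec by (simp add: available_def unfinished_def qidx_eq_queue_of)
  qed
  thus "available n p sim_schedule j t \<longleftrightarrow> unfinished (recv k) j"
    and "qidx \<delta> ph sim_schedule j t = q j (recv k j)" by auto
qed

abbreviation sim_enters_before :: "nat \<Rightarrow> nat \<Rightarrow> int \<Rightarrow> bool" where
  "sim_enters_before a b i \<equiv> enters_before \<delta> ph sim_schedule a b i"

lemma promotion_step:
  assumes "q j (recv (Suc k) j) \<noteq> q j (recv k j)"
  shows "j \<in> runs k" "recv (Suc k) j = thr \<delta> (q j (recv k j) + 1)"
proof -
  show run: "j \<in> runs k" using assms by (auto simp: sim_state_Suc split: if_splits)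
  have "\<not> recv (Suc k) j < thr \<delta> (q j (recv k j) + 1)"
    using assms queue_of_eq[OF \<delta>_pos recv_mono_Suc[of k j]] by auto
  thus "recv (Suc k) j = thr \<delta> (q j (recv k j) + 1)" using recv_Suc_le_thr[OF run] by simp
qed

lemma received_before_promotion:
  assumes "q j (recv (Suc k) j) \<noteq> q j (recv k j)" "s < event_time (Suc k)"
  shows "received sim_schedule j s < thr \<delta> (q j (recv k j) + 1)"
proof (cases "event_time k \<le> s")
  case True
  have "received sim_schedule j s = recv k j + (s - event_time k)"
    using received_sim_schedule[OF True] assms(2) promotion_step(1)[OF assms(1)] by simp
  also have "\<dots> < recv (Suc k) j"
    using assms(2) promotion_step(1)[OF assms(1)] by (simp add: sim_state_Suc)
  finally show ?thesis using promotion_step(2)[OF assms(1)] by simp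
next
  case False
  hence "received sim_schedule j s \<le> received sim_schedule j (event_time k)"
    by (intro received_mono[OF sim_integrable]) simp
  also have "\<dots> < thr \<delta> (q j (recv k j) + 1)"
    using less_thr_queue_of[OF \<delta>_pos] by (simp add: received_event_time)
  finally show ?thesis .
qed

lemma reached_after_promotion:
  assumes "q j (recv (Suc k) j) \<noteq> q j (recv k j)" "s \<le> event_time (Suc k)"
  shows "reached \<delta> ph sim_schedule j (q j (recv (Suc k) j)) s \<longleftrightarrow> s = event_time (Suc k)"
proof -
  let ?i = "q j (recv k j) + 1"
  have "kinit \<delta> ph j < ?i" using kinit_le_queue_of[OF \<delta>_pos, of ph j "recv k j"] by linarith
  hence new: "q j (recv (Suc k) j) = ?i"
    and reach: "reached \<delta> ph sim_schedule j ?i s \<longleftrightarrow> thr \<delta> ?i \<le> received sim_schedule j s"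
    using promotion_step(2)[OF assms(1)] queue_of_thr[OF \<delta>_pos] by (auto simp: reached_def)
  have "thr \<delta> ?i \<le> received sim_schedule j s \<longleftrightarrow> s = event_time (Suc k)"
    using received_before_promotion[OF assms(1), of s] assms(2) promotion_step(2)[OF assms(1)]
      received_event_time[of j "Suc k"] by force
  thus ?thesis using new reach by simp
qed

lemma entry_time_correct:
  "0 \<le> entry_time k j \<and> entry_time k j \<le> event_time k \<and>
   (\<forall>s. 0 \<le> s \<longrightarrow> s \<le> event_time k \<longrightarrow>
      (reached \<delta> ph sim_schedule j (q j (recv k j)) s \<longleftrightarrow> entry_time k j \<le> s))"
proof (induction k)
  case 0
  thus ?case by (simp add: queue_of_zero[OF \<delta>_pos] reached_def)
next
  case (Suc k)
  have step: "event_time k \<le> event_time (Suc k)"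
    using step_length_pos[of "recv k" "entry_time k"] by (simp add: sim_state_Suc)
  show ?case
  proof (cases "q j (recv (Suc k) j) = q j (recv k j)")
    case True
    hence "entry_time (Suc k) j = entry_time k j" by (simp add: sim_state_Suc)
    moreover have "reached \<delta> ph sim_schedule j (q j (recv k j)) s" if "event_time k \<le> s" for s
      using Suc event_time_nonneg[of k] reached_mono[OF sim_integrable that] by blast
    ultimately show ?thesis using Suc True step by (smt (verit))
  next
    case False
    thus ?thesis using reached_after_promotion[OF False] event_time_nonneg[of "Suc k"]
      by (auto simp: sim_state_Suc(3)[of k j])
  qed
qed

lemma enters_before_iff:
  assumes "q a (recv k a) = i" "q b (recv k b) = i"
  shows "sim_enters_before a b i \<longleftrightarrow> entry_time k a < entry_time k b"
proof
  assume "sim_enters_before a b i"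
  then obtain s where s: "0 \<le> s" "reached \<delta> ph sim_schedule a i s" "\<not> reached \<delta> ph sim_schedule b i s"
    by (auto simp: enters_before_def)
  have "reached \<delta> ph sim_schedule b i (event_time k)"
    using entry_time_correct[of k b] assms(2) event_time_nonneg[of k] by auto
  hence "s < event_time k" using s(3) reached_mono[OF sim_integrable] by (meson not_le less_imp_le)
  thus "entry_time k a < entry_time k b"
    using entry_time_correct[of k a] entry_time_correct[of k b] assms s by fastforce
next
  assume "entry_time k a < entry_time k b"
  thus "sim_enters_before a b i"
    using entry_time_correct[of k a] entry_time_correct[of k b] assms
    unfolding enters_before_def by (intro exI[of _ "entry_time k a"]) auto
qed

definition queue_order :: "int \<Rightarrow> nat \<Rightarrow> nat \<Rightarrow> bool" where
  "queue_order i a b \<longleftrightarrow> sim_enters_before a b i \<or> (\<not> sim_enters_before b a i \<and> a < b)"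

definition sim_pos :: "nat \<Rightarrow> int \<Rightarrow> nat" where
  "sim_pos j i = order_rank (queue_order i) {..<n} j"

lemma queue_order_strict_total:
  "irreflp_on A (queue_order i)" "transp_on A (queue_order i)" "totalp_on A (queue_order i)"
proof -
  have asym: "asymp (\<lambda>a b. sim_enters_before a b i)"
    by (rule asymp_enters_before) (rule sim_integrable)
  show "irreflp_on A (queue_order i)"
    using asym by (auto simp: queue_order_def irreflp_on_def dest: asympD)
  show "transp_on A (queue_order i)"
    using transp_tiebreak[OF asym enters_before_negtrans] unfolding queue_order_def
    by (auto simp: transp_on_def transp_def)
  show "totalp_on A (queue_order i)" by (auto simp: queue_order_def totalp_on_def)
qed

lemma sim_pos_less_iff:
  assumes "a < n" "b < n"
  shows "sim_pos a i < sim_pos b i \<longleftrightarrow> queue_order i a b"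
proof -
  note ord = queue_order_strict_total[of "{..<n}" i]
  have less: "queue_order i x y \<Longrightarrow> sim_pos x i < sim_pos y i" if "x < n" "y < n" for x y
    unfolding sim_pos_def using that by (intro order_rank_less[OF _ ord(1,2)]) auto
  show ?thesis
  proof
    assume lt: "sim_pos a i < sim_pos b i"
    hence "a \<noteq> b" by auto
    hence "queue_order i a b \<or> queue_order i b a" using ord(3) assms by (auto simp: totalp_on_def)
    thus "queue_order i a b" using less[OF assms(2,1)] lt by auto
  qed (rule less[OF assms])
qed

lemma sim_valid_positions: "valid_positions n \<delta> ph sim_schedule sim_pos"
  unfolding valid_positions_def sim_pos_def
  using inj_on_order_rank[of "{..<n}", OF _ queue_order_strict_total] sim_pos_less_iff
  by (auto simp: sim_pos_def queue_order_def)

lemma prio_less_iff_sim_before: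
  assumes t: "event_time k \<le> t" "t < event_time (Suc k)"
    and "unfinished (recv k) a" "unfinished (recv k) b"
  shows "prio_less \<delta> ph sim_schedule sim_pos a b t \<longleftrightarrow> sim_before (recv k) (entry_time k) a b"
proof (cases "q a (recv k a) = q b (recv k b)")
  case True
  define i where "i = q a (recv k a)"
  have n: "a < n" "b < n" using assms(3,4) by (auto simp: unfinished_def)
  have qa: "q a (recv k a) = i" and qb: "q b (recv k b) = i" using True by (simp_all add: i_def)
  have "sim_pos a i < sim_pos b i \<longleftrightarrow> queue_order i a b" by (rule sim_pos_less_iff[OF n])
  also have "\<dots> \<longleftrightarrow> entry_time k a < entry_time k b \<or> (\<not> entry_time k b < entry_time k a \<and> a < b)"
    by (simp only: queue_order_def enters_before_iff[OF qa qb] enters_before_iff[OF qb qa])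
  also have "\<dots> \<longleftrightarrow> entry_time k a < entry_time k b \<or> (entry_time k a = entry_time k b \<and> a < b)"
    by auto
  finally show ?thesis using qa qb sim_state_between_events(2)[OF t]
    by (simp add: prio_less_def sim_before_def)
next
  case False
  thus ?thesis using sim_state_between_events(2)[OF t] by (simp add: prio_less_def sim_before_def)
qed

theorem sim_is_PMLF: "is_PMLF n m \<delta> p ph sim_schedule sim_pos"
  unfolding is_PMLF_def
proof (intro conjI allI impI sim_feasible sim_valid_positions)
  fix t :: real assume "0 \<le> t"
  define k where "k = epoch t"
  have t: "event_time k \<le> t" "t < event_time (Suc k)" using epoch_bounds[OF \<open>0 \<le> t\<close>] by (auto simp: k_def)
  note avail = sim_state_between_events(1)[OF t]
  have "{j'. available n p sim_schedule j' t \<and> prio_less \<delta> ph sim_schedule sim_pos j' j t} =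
        {j'. unfinished (recv k) j' \<and> sim_before (recv k) (entry_time k) j' j}"
    if "unfinished (recv k) j" for j
    using avail prio_less_iff_sim_before[OF t _ that] by blast
  thus "sim_schedule t = {j. available n p sim_schedule j t \<and>
          card {j'. available n p sim_schedule j' t \<and> prio_less \<delta> ph sim_schedule sim_pos j' j t} < m}"
    using sim_schedule_eq[OF t] avail by (auto simp: running_def)
qed

end

theorem PMLF_exists:
  assumes "\<delta> > 0"
  shows "\<exists>S pos. is_PMLF n m \<delta> p ph S pos"
proof -
  interpret pmlf_sim n m \<delta> p ph by unfold_locales (rule assms)
  show ?thesis using sim_is_PMLF by blast
qed

theorem mainTheorem4:
  fixes \<delta> :: real
  assumes "\<delta> > 0"
  shows "\<exists>c::real. \<forall>(n::nat) (m::nat) (p::nat \<Rightarrow> real) (ph::nat \<Rightarrow> real).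
    m \<ge> 1 \<and> (\<forall>j<n. 1 \<le> p j \<and> 0 < ph j \<and> ph j \<le> p j) \<longrightarrow>
      (\<exists>S pos. is_PMLF n m \<delta> p ph S pos) \<and>
      (\<forall>S pos. is_PMLF n m \<delta> p ph S pos \<longrightarrow>
         (\<forall>j<n. completes S p j) \<and>
         (\<forall>S'. feasible_schedule n m S' \<and> (\<forall>j<n. completes S' p j) \<longrightarrow>
               total_cost n S p \<le> (2 + 2 * \<delta>) * total_cost n S' p) \<and>
         (\<forall>j<n. finite {t. preempt_at S p j t}) \<and>
         real (\<Sum>j<n. num_preemptions S p j)
            \<le> c * (\<Sum>j<n. of_int \<lceil>ln (p j / ph j) / \<delta>\<rceil>))"
proof -
  have inst: "pmlf_run n m \<delta> p ph S pos"
    if "m \<ge> 1 \<and> (\<forall>j<n. 1 \<le> p j \<and> 0 < ph j \<and> ph j \<le> p j)" "is_PMLF n m \<delta> p ph S pos"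
    for n m p ph S pos
    using assms that by unfold_locales auto
  show ?thesis
    by (intro exI[of _ "\<delta> / ln (1 + \<delta>) + 1"] allI impI conjI PMLF_exists[OF assms])
      (use pmlf_run.PMLF_guarantees[OF inst] in blast)+
qed

end
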